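(* Let $\mathcal A,\mathcal B>0$, $\alpha,\beta\in(0,1)$, $h,\tau>0$. If $$\frac{\tau^{\alpha}(-\alpha^2+4\alpha-2)\mathcal A+\tau^{\beta}(-\beta^2+4\beta-2)\mathcal B}{h^2}\le\frac{37}{120},$$ then for every real $\theta$, with $s=\sin^2(\theta h/2)$, $$\mathcal P=\Big[1-\tfrac{8}{45}s^2\Big]-4g_1^{(\alpha,\beta)}s\Big[1+\tfrac13 s\Big]\ge0.$$
   Context: $\varpi_\ell^{(\sigma)}=(-1)^\ell\binom{\sigma}{\ell}$, $g_0^{(\sigma)}=\frac{1+\sigma}{2}\varpi_0^{(\sigma)}$, $g_\ell^{(\sigma)}=\frac{1+\sigma}{2}\varpi_\ell^{(\sigma)}+\frac{1-\sigma}{2}\varpi_{\ell-1}^{(\sigma)}$ ($\ell\ge1$); $\mu_\alpha=\tau^\alpha\mathcal A/h^2$, $\mu_\beta=\tau^\beta\mathcal B/h^2$, $g_\ell^{(\alpha,\beta)}=\mu_\alpha g_\ell^{(1-\alpha)}+\mu_\beta g_\ell^{(1-\beta)}$. *)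

theory Defs
  imports Complex_Main
begin

definition varpi :: "real \<Rightarrow> nat \<Rightarrow> real" where
  "varpi \<sigma> l = (-1) ^ l * (\<sigma> gchoose l)"

definition gcoef :: "real \<Rightarrow> nat \<Rightarrow> real" where
  "gcoef \<sigma> l = (if l = 0 then (1 + \<sigma>) / 2 * varpi \<sigma> 0
     else (1 + \<sigma>) / 2 * varpi \<sigma> l + (1 - \<sigma>) / 2 * varpi \<sigma> (l - 1))"

definition mu :: "real \<Rightarrow> real \<Rightarrow> real \<Rightarrow> real \<Rightarrow> real" where
  "mu \<tau> \<gamma> C h = \<tau> powr \<gamma> * C / h^2"

definition gab :: "real \<Rightarrow> real \<Rightarrow> real \<Rightarrow> real \<Rightarrow> real \<Rightarrow> real \<Rightarrow> nat \<Rightarrow> real" where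
  "gab \<tau> h \<alpha> \<beta> A B l = mu \<tau> \<alpha> A h * gcoef (1 - \<alpha>) l + mu \<tau> \<beta> B h * gcoef (1 - \<beta>) l"

end

theory Submission
  imports Defs
begin

text \<open>Since \<open>g\<^sub>1\<^sup>(\<^sup>\<sigma>\<^sup>) = (1 - 2\<sigma> - \<sigma>\<^sup>2)/2\<close>, the hypothesis says exactly
  \<open>g\<^sub>1\<^sup>(\<^sup>\<alpha>\<^sup>,\<^sup>\<beta>\<^sup>) \<le> 37/240\<close>. For \<open>s \<in> [0,1]\<close> the expression is then at least
  \<open>1 - 111/180 s - 69/180 s\<^sup>2\<close>, which is decreasing on \<open>[0,1]\<close> and vanishes at \<open>s = 1\<close>;
  so the constant \<open>37/120\<close> is sharp.\<close>

lemma gcoef_1: "gcoef \<sigma> 1 = (1 - 2 * \<sigma> - \<sigma>\<^sup>2) / 2"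
  unfolding gcoef_def varpi_def by (simp add: field_simps power2_eq_square)

lemma gab_1:
  "gab \<tau> h \<alpha> \<beta> A B 1 =
     (\<tau> powr \<alpha> * (- (\<alpha>^2) + 4*\<alpha> - 2) * A + \<tau> powr \<beta> * (- (\<beta>^2) + 4*\<beta> - 2) * B) / h^2 / 2"
  unfolding gab_def mu_def gcoef_1
  by (simp add: diff_divide_distrib add_divide_distrib algebra_simps power2_eq_square)

lemma amplification_poly_nonneg:
  fixes g s :: real
  assumes "g \<le> 37/240" "0 \<le> s" "s \<le> 1"
  shows "(1 - 8/45 * s^2) - 4 * g * s * (1 + s/3) \<ge> 0"
proof -
  have "4 * g * s * (1 + s/3) \<le> 4 * (37/240) * s * (1 + s/3)"
    using assms by (intro mult_right_mono) auto
  moreover have "s^2 \<le> s"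
    using assms by (simp add: power2_eq_square mult_left_le)
  moreover have "(1 - 8/45 * s^2) - 4 * (37/240) * s * (1 + s/3) = 1 - 69/180 * s^2 - 111/180 * s"
    by (simp add: algebra_simps power2_eq_square)
  ultimately show ?thesis
    using assms by linarith
qed

theorem lemma6:
  fixes A B \<alpha> \<beta> h \<tau> :: real
  assumes "A > 0" "B > 0" "0 < \<alpha>" "\<alpha> < 1" "0 < \<beta>" "\<beta> < 1" "h > 0" "\<tau> > 0"
    and "(\<tau> powr \<alpha> * (- (\<alpha>^2) + 4*\<alpha> - 2) * A + \<tau> powr \<beta> * (- (\<beta>^2) + 4*\<beta> - 2) * B) / h^2 \<le> 37/120"
  shows "\<forall>\<theta>::real. let s = (sin (\<theta> * h / 2))^2 in
           (1 - 8/45 * s^2) - 4 * gab \<tau> h \<alpha> \<beta> A B 1 * s * (1 + s/3) \<ge> 0"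
proof
  fix \<theta> :: real
  have "gab \<tau> h \<alpha> \<beta> A B 1 \<le> 37/240"
    using assms(9) unfolding gab_1 by (simp only: divide_le_eq_numeral1)
  moreover have "(sin (\<theta> * h / 2))^2 \<le> 1"
    by (simp add: sin_squared_eq)
  ultimately show "let s = (sin (\<theta> * h / 2))^2 in
           (1 - 8/45 * s^2) - 4 * gab \<tau> h \<alpha> \<beta> A B 1 * s * (1 + s/3) \<ge> 0"
    unfolding Let_def by (intro amplification_poly_nonneg) auto
qed

end
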